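(* Let $T$ be a finite graph such that every graph homomorphism $T\to T$ is an automorphism (i.e. $\mathrm{End}(T)=\mathrm{Aut}(T)$). If there is a path component of $\mathrm{Hom}(T,K_{\chi(T)})$ which is invariant under the action of $\mathrm{Aut}(T)$ (acting by $f\mapsto f\circ\gamma$), then there exists a graph $G$ with $\chi(G)=\chi(T)$ such that $\mathrm{Hom}(T,G)$ is non-empty and connected.
   Context: Graphs are pairs $(V(G),E(G))$ with $E(G)\subseteq V(G)\times V(G)$ a symmetric relation (loops allowed); a graph homomorphism $f\colon G\to H$ is a map $V(G)\to V(H)$ with $(f(u),f(v))\in E(H)$ for all $(u,v)\in E(G)$. $K_r$ is the complete graph on $r$ vertices without loops, $\chi$ the chromatic number. For graphs $T,G$, $\mathrm{Hom}(T,G)$ is a cell complex whose vertices are the graph homomorphisms $T\to G$, and two homomorphisms are joined by an edge if and only if they differ at exactly one vertex of $T$; path components and connectedness may be computed in the graph formed by these vertices and edges; "connected" means non-empty and path-connected. *)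

theory Defs
  imports "HOL-Library.FuncSet" "HOL-Library.Extended_Nat"
begin

text \<open>A graph is a pair (V, E) with E a symmetric relation on V (loops allowed).\<close>
type_synonym 'a graph = "'a set \<times> ('a \<times> 'a) set"

definition verts :: "'a graph \<Rightarrow> 'a set" where "verts G = fst G"
definition edges :: "'a graph \<Rightarrow> ('a \<times> 'a) set" where "edges G = snd G"

definition wf_graph :: "'a graph \<Rightarrow> bool" where
  "wf_graph G \<longleftrightarrow> edges G \<subseteq> verts G \<times> verts G \<and> sym (edges G)"

text \<open>Graph homomorphisms, as maps on the vertex set (values outside V(T) irrelevant).\<close>
definition graph_hom :: "'a graph \<Rightarrow> 'b graph \<Rightarrow> ('a \<Rightarrow> 'b) \<Rightarrow> bool" where
  "graph_hom T G f \<longleftrightarrow> (\<forall>x\<in>verts T. f x \<in> verts G) \<and>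
     (\<forall>(u,v)\<in>edges T. (f u, f v) \<in> edges G)"

definition graph_aut :: "'a graph \<Rightarrow> ('a \<Rightarrow> 'a) \<Rightarrow> bool" where
  "graph_aut T g \<longleftrightarrow> graph_hom T T g \<and> bij_betw g (verts T) (verts T) \<and>
     (\<forall>u\<in>verts T. \<forall>v\<in>verts T. (g u, g v) \<in> edges T \<longrightarrow> (u, v) \<in> edges T)"

definition complete_graph :: "nat \<Rightarrow> nat graph" where
  "complete_graph r = ({0..<r}, {(i,j). i < r \<and> j < r \<and> i \<noteq> j})"

text \<open>Chromatic number (infinite if no proper colouring with finitely many colours exists).\<close>
definition chromatic_number :: "'a graph \<Rightarrow> enat" where
  "chromatic_number G = (INF k \<in> {k. \<exists>f. graph_hom G (complete_graph k) f}. enat k)"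

text \<open>Vertices of Hom(T,G): homomorphisms, represented canonically as extensional maps on V(T).\<close>
definition hom_vertices :: "'a graph \<Rightarrow> 'b graph \<Rightarrow> ('a \<Rightarrow> 'b) set" where
  "hom_vertices T G = {f. f \<in> extensional (verts T) \<and> graph_hom T G f}"

text \<open>Edges of the 1-skeleton of Hom(T,G): homomorphisms differing at exactly one vertex of T.\<close>
definition hom_adj :: "'a graph \<Rightarrow> 'b graph \<Rightarrow> (('a \<Rightarrow> 'b) \<times> ('a \<Rightarrow> 'b)) set" where
  "hom_adj T G = {(f,g). f \<in> hom_vertices T G \<and> g \<in> hom_vertices T G \<and>
      card {x \<in> verts T. f x \<noteq> g x} = 1}"

definition hom_path_component :: "'a graph \<Rightarrow> 'b graph \<Rightarrow> ('a \<Rightarrow> 'b) set \<Rightarrow> bool" where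
  "hom_path_component T G C \<longleftrightarrow>
     (\<exists>f \<in> hom_vertices T G. C = {g. (f, g) \<in> (hom_adj T G)\<^sup>*})"

definition hom_connected :: "'a graph \<Rightarrow> 'b graph \<Rightarrow> bool" where
  "hom_connected T G \<longleftrightarrow> hom_vertices T G \<noteq> {} \<and>
     (\<forall>f \<in> hom_vertices T G. \<forall>g \<in> hom_vertices T G. (f, g) \<in> (hom_adj T G)\<^sup>*)"

definition aut_invariant :: "'a graph \<Rightarrow> ('a \<Rightarrow> 'b) set \<Rightarrow> bool" where
  "aut_invariant T C \<longleftrightarrow>
     (\<forall>\<gamma>. graph_aut T \<gamma> \<longrightarrow> (\<forall>f \<in> C. restrict (f \<circ> \<gamma>) (verts T) \<in> C))"

end

theory Submission
  imports Defs
begin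

text \<open>
  Let \<open>f\<close> be an \<open>r\<close>-colouring of \<open>T\<close>, \<open>r = \<chi>(T)\<close>, in the \<open>Aut(T)\<close>-invariant component, so that
  for every automorphism \<open>\<sigma>\<close> there is a walk in \<open>Hom(T, K\<^sub>r)\<close> from \<open>f\<close> to \<open>f \<circ> \<sigma>\<close>. Glue to a
  copy of \<open>T\<close>, for every \<open>\<sigma>\<close>, a long cylinder \<open>T \<times> [0, M]\<close>, attached at one end identically and
  at the other along \<open>\<sigma>\<close>. Colouring level \<open>i\<close> of the \<open>\<sigma>\<close>-cylinder by the \<open>i\<close>-th step of the walk is
  proper, because consecutive colourings differ at a single vertex; so the glued graph \<open>G\<close>
  has \<open>\<chi>(G) = \<chi>(T)\<close>. A homomorphism \<open>T \<rightarrow> G\<close> misses some level of the cylinders (\<open>M > |T|\<close>),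
  so it can be deformed onto the base copy of \<open>T\<close>, where it is an endomorphism and hence an
  automorphism \<open>e\<close>; the inclusion of the base deforms onto it through the \<open>e\<close>-cylinder. Every
  deformation moves through maps adjacent in the exponential graph \<open>G\<^sup>T\<close>, and such maps are
  joined by paths in \<open>Hom(T, G)\<close>.
\<close>

lemma graph_hom_comp:
  "graph_hom A B h \<Longrightarrow> graph_hom B C f \<Longrightarrow> graph_hom A C (f \<circ> h)"
  unfolding graph_hom_def by fastforce

lemma chromatic_number_mono:
  assumes "graph_hom A B h"
  shows "chromatic_number A \<le> chromatic_number B"
  unfolding chromatic_number_def
  by (rule INF_superset_mono) (use graph_hom_comp[OF assms] in blast)+

lemma chromatic_number_le_if_colouring:
  "graph_hom A (complete_graph r) f \<Longrightarrow> chromatic_number A \<le> enat r"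
  unfolding chromatic_number_def by (rule INF_lower) auto

lemma wf_graph_edgeD:
  assumes "wf_graph T" "(u, v) \<in> edges T"
  shows "u \<in> verts T" "v \<in> verts T" "(v, u) \<in> edges T"
  using assms by (auto simp: wf_graph_def sym_def)

lemma restrict_in_hom_vertices:
  assumes "wf_graph T" "graph_hom T G f"
  shows "restrict f (verts T) \<in> hom_vertices T G"
  using assms by (auto simp: hom_vertices_def graph_hom_def dest: wf_graph_edgeD)

lemma sym_hom_adj: "sym (hom_adj T G)"
  by (rule symI) (auto simp: hom_adj_def eq_commute)

lemma rtrancl_hom_adj_sym: "(f, g) \<in> (hom_adj T G)\<^sup>* \<Longrightarrow> (g, f) \<in> (hom_adj T G)\<^sup>*"
  by (meson sym_hom_adj sym_rtrancl symD)

text \<open>Two homomorphisms that are adjacent in the exponential graph are joined by a path: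
  switch the vertices on which they differ one at a time; every intermediate map is again a
  homomorphism.\<close>

lemma rtrancl_hom_adj_if_pointwise_adjacent:
  assumes fin: "finite (verts T)"
    and "f \<in> hom_vertices T G" "g \<in> hom_vertices T G"
    and "\<And>x y. (x, y) \<in> edges T \<Longrightarrow> (f x, g y) \<in> edges G \<and> (g x, f y) \<in> edges G"
  shows "(f, g) \<in> (hom_adj T G)\<^sup>*"
  using assms(2-)
proof (induction "card {x \<in> verts T. f x \<noteq> g x}" arbitrary: f)
  case 0
  then have "\<forall>x\<in>verts T. f x = g x" using fin by simp
  then have "f = g" using "0.prems" by (auto simp: hom_vertices_def intro: extensionalityI)
  then show ?case by simp
next
  case (Suc n)
  obtain z where z: "z \<in> verts T" "f z \<noteq> g z"
    using Suc.hyps(2) by (metis (mono_tags, lifting) card.empty empty_Collect_eq nat.distinct(1))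
  define f' where "f' = f(z := g z)"
  have adj': "(f' x, g y) \<in> edges G \<and> (g x, f' y) \<in> edges G" if "(x, y) \<in> edges T" for x y
    using Suc.prems that by (auto simp: f'_def hom_vertices_def graph_hom_def)
  have "graph_hom T G f'"
  proof -
    have "(f' x, f' y) \<in> edges G" if "(x, y) \<in> edges T" for x y
      using Suc.prems that by (cases "x = z"; cases "y = z") (auto simp: f'_def hom_vertices_def graph_hom_def)
    then show ?thesis using Suc.prems z by (auto simp: f'_def hom_vertices_def graph_hom_def)
  qed
  then have f': "f' \<in> hom_vertices T G"
    using Suc.prems(1) z by (auto simp: f'_def hom_vertices_def extensional_def)
  have "{x \<in> verts T. f x \<noteq> f' x} = {z}" using z by (auto simp: f'_def)
  then have "(f, f') \<in> hom_adj T G" using Suc.prems(1) f' by (simp add: hom_adj_def)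
  moreover have "{x \<in> verts T. f' x \<noteq> g x} = {x \<in> verts T. f x \<noteq> g x} - {z}"
    using z by (auto simp: f'_def)
  then have "(f', g) \<in> (hom_adj T G)\<^sup>*"
    using Suc z fin f' adj' by simp
  ultimately show ?case by (rule converse_rtrancl_into_rtrancl)
qed

text \<open>A discrete homotopy: stages \<open>i\<close> and \<open>i + 1\<close> are adjacent in the exponential graph, and the
  case \<open>i = j\<close> makes every stage a homomorphism.\<close>

lemma rtrancl_hom_adj_chain:
  assumes wf: "wf_graph T" and fin: "finite (verts T)"
    and vert: "\<And>i x. i \<le> n \<Longrightarrow> x \<in> verts T \<Longrightarrow> \<Phi> i x \<in> verts G"
    and edge: "\<And>i j x y. i \<le> n \<Longrightarrow> j \<le> n \<Longrightarrow> i \<le> Suc j \<Longrightarrow> j \<le> Suc i \<Longrightarrow>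
      (x, y) \<in> edges T \<Longrightarrow> (\<Phi> i x, \<Phi> j y) \<in> edges G"
  shows "(restrict (\<Phi> 0) (verts T), restrict (\<Phi> n) (verts T)) \<in> (hom_adj T G)\<^sup>*"
proof -
  have hom: "restrict (\<Phi> i) (verts T) \<in> hom_vertices T G" if "i \<le> n" for i
    using that vert edge[of i i] by (auto simp: hom_vertices_def graph_hom_def dest: wf_graph_edgeD[OF wf])
  have "(restrict (\<Phi> 0) (verts T), restrict (\<Phi> i) (verts T)) \<in> (hom_adj T G)\<^sup>*" if "i \<le> n" for i
    using that
  proof (induction i)
    case (Suc i)
    have "(restrict (\<Phi> i) (verts T), restrict (\<Phi> (Suc i)) (verts T)) \<in> (hom_adj T G)\<^sup>*"
      using Suc.prems
      by (intro rtrancl_hom_adj_if_pointwise_adjacent fin hom) (auto intro: edge dest: wf_graph_edgeD[OF wf])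
    with Suc show ?case by (meson Suc_leD rtrancl_trans)
  qed simp
  then show ?thesis by simp
qed

definition map_graph :: "('b \<Rightarrow> 'c) \<Rightarrow> 'b graph \<Rightarrow> 'c graph" where
  "map_graph \<phi> G = (\<phi> ` verts G, map_prod \<phi> \<phi> ` edges G)"

lemma verts_map_graph [simp]: "verts (map_graph \<phi> G) = \<phi> ` verts G"
  and edges_map_graph [simp]: "edges (map_graph \<phi> G) = map_prod \<phi> \<phi> ` edges G"
  by (simp_all add: map_graph_def verts_def edges_def)

lemma wf_graph_map_graph: "wf_graph G \<Longrightarrow> wf_graph (map_graph \<phi> G)"
  by (auto simp: wf_graph_def sym_def)

lemma graph_hom_map_graph: "graph_hom G (map_graph \<phi> G) \<phi>"
  by (auto simp: graph_hom_def)

lemma graph_hom_map_graph_inv: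
  assumes "wf_graph G" "inj_on \<phi> (verts G)"
  shows "graph_hom (map_graph \<phi> G) G (inv_into (verts G) \<phi>)"
proof -
  have "inv_into (verts G) \<phi> (\<phi> x) = x" if "x \<in> verts G" for x
    using assms(2) that by simp
  then show ?thesis
    using wf_graph_edgeD(1,2)[OF assms(1)] by (auto simp: graph_hom_def)
qed

lemma chromatic_number_map_graph:
  assumes "wf_graph G" "inj_on \<phi> (verts G)"
  shows "chromatic_number (map_graph \<phi> G) = chromatic_number G"
  using chromatic_number_mono[OF graph_hom_map_graph] chromatic_number_mono[OF graph_hom_map_graph_inv[OF assms]]
  by (rule antisym[rotated])

lemma hom_connected_map_graph:
  assumes wfT: "wf_graph T" and wf: "wf_graph G" and inj: "inj_on \<phi> (verts G)"
    and conn: "hom_connected T G"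
  shows "hom_connected T (map_graph \<phi> G)"
proof -
  let ?H = "map_graph \<phi> G"
  define \<Phi> where "\<Phi> g = restrict (\<phi> \<circ> g) (verts T)" for g :: "'a \<Rightarrow> 'b"
  have \<Phi>_hom: "\<Phi> g \<in> hom_vertices T ?H" if "g \<in> hom_vertices T G" for g
    using that unfolding \<Phi>_def hom_vertices_def
    by (intro restrict_in_hom_vertices[OF wfT, unfolded hom_vertices_def] graph_hom_comp[OF _ graph_hom_map_graph]) simp
  have \<Phi>_adj: "(\<Phi> f, \<Phi> g) \<in> hom_adj T ?H" if "(f, g) \<in> hom_adj T G" for f g
  proof -
    have f: "f \<in> hom_vertices T G" and g: "g \<in> hom_vertices T G" using that by (auto simp: hom_adj_def)
    then have "\<phi> (f x) = \<phi> (g x) \<longleftrightarrow> f x = g x" if "x \<in> verts T" for x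
      using inj that by (auto simp: hom_vertices_def graph_hom_def inj_on_def)
    then have "{x \<in> verts T. \<Phi> f x \<noteq> \<Phi> g x} = {x \<in> verts T. f x \<noteq> g x}"
      by (auto simp: \<Phi>_def)
    then show ?thesis using that \<Phi>_hom[OF f] \<Phi>_hom[OF g] by (simp add: hom_adj_def)
  qed
  have \<Phi>_rtrancl: "(\<Phi> f, \<Phi> g) \<in> (hom_adj T ?H)\<^sup>*" if "(f, g) \<in> (hom_adj T G)\<^sup>*" for f g
    using that by induction (auto intro: rtrancl_into_rtrancl \<Phi>_adj)
  have \<Phi>_surj: "h \<in> \<Phi> ` hom_vertices T G" if h: "h \<in> hom_vertices T ?H" for h
  proof
    let ?g = "restrict (inv_into (verts G) \<phi> \<circ> h) (verts T)"
    show "?g \<in> hom_vertices T G"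
      by (intro restrict_in_hom_vertices[OF wfT] graph_hom_comp[OF _ graph_hom_map_graph_inv[OF wf inj]])
        (use h in \<open>simp add: hom_vertices_def\<close>)
    have "h x \<in> \<phi> ` verts G" if "x \<in> verts T" for x
      using h that by (auto simp: hom_vertices_def graph_hom_def)
    then show "h = \<Phi> ?g"
      using h by (intro extensionalityI[where A = "verts T"]) (simp_all add: \<Phi>_def hom_vertices_def f_inv_into_f)
  qed
  show ?thesis
    unfolding hom_connected_def
  proof (intro conjI ballI)
    show "hom_vertices T ?H \<noteq> {}"
      using conn \<Phi>_hom unfolding hom_connected_def by blast
    fix h h' assume "h \<in> hom_vertices T ?H" "h' \<in> hom_vertices T ?H"
    then obtain g g' where "g \<in> hom_vertices T G" "g' \<in> hom_vertices T G" "h = \<Phi> g" "h' = \<Phi> g'"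
      using \<Phi>_surj by blast
    then show "(h, h') \<in> (hom_adj T ?H)\<^sup>*"
      using conn \<Phi>_rtrancl unfolding hom_connected_def by blast
  qed
qed

definition automorphisms :: "'a graph \<Rightarrow> ('a \<Rightarrow> 'a) set" where
  "automorphisms T = {\<sigma> \<in> extensional (verts T). graph_aut T \<sigma>}"

lemma automorphisms_edge: "\<sigma> \<in> automorphisms T \<Longrightarrow> (u, v) \<in> edges T \<Longrightarrow> (\<sigma> u, \<sigma> v) \<in> edges T"
  and automorphisms_vert: "\<sigma> \<in> automorphisms T \<Longrightarrow> u \<in> verts T \<Longrightarrow> \<sigma> u \<in> verts T"
  by (auto simp: automorphisms_def graph_aut_def graph_hom_def)

lemma restrict_id_automorphisms:
  assumes "wf_graph T"
  shows "restrict id (verts T) \<in> automorphisms T"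
  using wf_graph_edgeD(1,2)[OF assms]
  by (auto simp: automorphisms_def graph_aut_def graph_hom_def bij_betw_def inj_on_def)

lemma finite_automorphisms: "finite (verts T) \<Longrightarrow> finite (automorphisms T)"
  by (rule finite_subset[OF _ finite_PiE[of "verts T" "\<lambda>_. verts T"]])
    (auto simp: automorphisms_def graph_aut_def graph_hom_def PiE_def)

type_synonym 'a bundle_vertex = "'a \<times> (('a \<Rightarrow> 'a) \<times> nat) option"

text \<open>For every automorphism \<open>\<sigma>\<close> a cylinder \<open>T \<times> {0..M}\<close>, in which \<open>u\<close> at level \<open>i\<close> and \<open>v\<close> at
  level \<open>j\<close> are adjacent iff \<open>u\<close> and \<open>v\<close> are and \<open>|i - j| \<le> 1\<close>, has its two ends glued to a base
  copy of \<open>T\<close>: level \<open>0\<close> identically, level \<open>M\<close> along \<open>\<sigma>\<close>.\<close>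

definition bundle_point :: "nat \<Rightarrow> ('a \<Rightarrow> 'a) \<Rightarrow> nat \<Rightarrow> 'a \<Rightarrow> 'a bundle_vertex" where
  "bundle_point M \<sigma> i u =
     (if i = 0 then (u, None) else if i < M then (u, Some (\<sigma>, i)) else (\<sigma> u, None))"

definition bundle_graph :: "'a graph \<Rightarrow> nat \<Rightarrow> 'a bundle_vertex graph" where
  "bundle_graph T M =
     ({bundle_point M \<sigma> i u | \<sigma> i u. \<sigma> \<in> automorphisms T \<and> i \<le> M \<and> u \<in> verts T},
      {(bundle_point M \<sigma> i u, bundle_point M \<sigma> j v) | \<sigma> i j u v.
         \<sigma> \<in> automorphisms T \<and> (u, v) \<in> edges T \<and> i \<le> M \<and> j \<le> M \<and> i \<le> Suc j \<and> j \<le> Suc i})"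

lemma verts_bundle_graph:
  "verts (bundle_graph T M) =
     {bundle_point M \<sigma> i u | \<sigma> i u. \<sigma> \<in> automorphisms T \<and> i \<le> M \<and> u \<in> verts T}"
  by (simp add: bundle_graph_def verts_def)

lemma edges_bundle_graph:
  "edges (bundle_graph T M) =
     {(bundle_point M \<sigma> i u, bundle_point M \<sigma> j v) | \<sigma> i j u v.
        \<sigma> \<in> automorphisms T \<and> (u, v) \<in> edges T \<and> i \<le> M \<and> j \<le> M \<and> i \<le> Suc j \<and> j \<le> Suc i}"
  by (simp add: bundle_graph_def edges_def)

lemma bundle_point_in_verts:
  "\<sigma> \<in> automorphisms T \<Longrightarrow> i \<le> M \<Longrightarrow> u \<in> verts T \<Longrightarrow> bundle_point M \<sigma> i u \<in> verts (bundle_graph T M)"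
  unfolding verts_bundle_graph by blast

lemma bundle_point_edge:
  "\<sigma> \<in> automorphisms T \<Longrightarrow> (u, v) \<in> edges T \<Longrightarrow> i \<le> M \<Longrightarrow> j \<le> M \<Longrightarrow> i \<le> Suc j \<Longrightarrow> j \<le> Suc i \<Longrightarrow>
    (bundle_point M \<sigma> i u, bundle_point M \<sigma> j v) \<in> edges (bundle_graph T M)"
  unfolding edges_bundle_graph by blast

lemma wf_bundle_graph:
  assumes "wf_graph T"
  shows "wf_graph (bundle_graph T M)"
  unfolding wf_graph_def
proof
  show "edges (bundle_graph T M) \<subseteq> verts (bundle_graph T M) \<times> verts (bundle_graph T M)"
    unfolding edges_bundle_graph using wf_graph_edgeD(1,2)[OF assms]
    by (blast intro: bundle_point_in_verts)
  show "sym (edges (bundle_graph T M))"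
  proof (rule symI)
    fix p q assume "(p, q) \<in> edges (bundle_graph T M)"
    then obtain \<sigma> i j u v where "p = bundle_point M \<sigma> i u" "q = bundle_point M \<sigma> j v"
      "\<sigma> \<in> automorphisms T" "(u, v) \<in> edges T" "i \<le> M" "j \<le> M" "i \<le> Suc j" "j \<le> Suc i"
      unfolding edges_bundle_graph by blast
    then show "(q, p) \<in> edges (bundle_graph T M)"
      using wf_graph_edgeD(3)[OF assms] by (simp add: bundle_point_edge)
  qed
qed

lemma finite_bundle_graph:
  assumes "finite (verts T)"
  shows "finite (verts (bundle_graph T M))"
proof -
  have "verts (bundle_graph T M) = (\<Union>\<sigma>\<in>automorphisms T. \<Union>i\<le>M. bundle_point M \<sigma> i ` verts T)"
    unfolding verts_bundle_graph by blast
  then show ?thesis using assms finite_automorphisms[OF assms] by simp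
qed

lemma graph_hom_bundle_base:
  assumes "wf_graph T"
  shows "graph_hom T (bundle_graph T M) (\<lambda>x. (x, None))"
proof -
  have "(x, None) = bundle_point M (restrict id (verts T)) 0 x" for x
    by (simp add: bundle_point_def)
  then show ?thesis
    using restrict_id_automorphisms[OF assms]
    by (auto simp: graph_hom_def intro: bundle_point_in_verts bundle_point_edge)
qed

lemma bundle_base_vert:
  "(x, None) \<in> verts (bundle_graph T M) \<Longrightarrow> x \<in> verts T"
  by (auto simp: verts_bundle_graph bundle_point_def automorphisms_vert split: if_splits)

lemma bundle_base_edge:
  assumes "2 \<le> M" "((x, None), (y, None)) \<in> edges (bundle_graph T M)"
  shows "(x, y) \<in> edges T"
  using assms by (auto simp: edges_bundle_graph bundle_point_def automorphisms_edge split: if_splits)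

text \<open>At time \<open>t\<close> the levels below \<open>c\<close> are cut down to at most \<open>t\<close> and those above \<open>c\<close> pushed
  to within \<open>t\<close> of \<open>M\<close>: nothing moves at \<open>t = M\<close>, and at \<open>t = 0\<close> everything lies in the base. Adjacent
  levels other than \<open>c\<close> lie on the same side of \<open>c\<close>, so they stay adjacent.\<close>

definition retract_level :: "nat \<Rightarrow> nat \<Rightarrow> nat \<Rightarrow> nat \<Rightarrow> nat" where
  "retract_level M c t i = (if i < c then min i t else M - min (M - i) t)"

lemma retract_level_le: "i \<le> M \<Longrightarrow> retract_level M c t i \<le> M"
  by (auto simp: retract_level_def min_le_iff_disj)

lemma retract_level_top: "i \<le> M \<Longrightarrow> retract_level M c M i = i"
  by (simp add: retract_level_def)

lemma retract_level_close:
  assumes "i \<le> M" "j \<le> M" "i \<le> Suc j" "j \<le> Suc i" "i \<noteq> c" "j \<noteq> c" "s \<le> Suc t" "t \<le> Suc s"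
  shows "retract_level M c s i \<le> Suc (retract_level M c t j)"
  using assms unfolding retract_level_def min_def by auto

definition bundle_retract :: "nat \<Rightarrow> nat \<Rightarrow> nat \<Rightarrow> 'a bundle_vertex \<Rightarrow> 'a bundle_vertex" where
  "bundle_retract M c t p = (case p of (u, None) \<Rightarrow> (u, None)
     | (u, Some (\<sigma>, i)) \<Rightarrow> bundle_point M \<sigma> (retract_level M c t i) u)"

lemma bundle_retract_point:
  assumes "0 < c" "c \<le> M" "i \<le> M"
  shows "bundle_retract M c t (bundle_point M \<sigma> i u) = bundle_point M \<sigma> (retract_level M c t i) u"
  using assms by (auto simp: bundle_retract_def bundle_point_def retract_level_def)

lemma bundle_retract_bottom: "snd (bundle_retract M c 0 p) = None"
  by (auto simp: bundle_retract_def bundle_point_def retract_level_def split: option.split prod.split)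

lemma bundle_retract_top:
  assumes "0 < c" "c \<le> M" "p \<in> verts (bundle_graph T M)"
  shows "bundle_retract M c M p = p"
  using assms by (auto simp: verts_bundle_graph bundle_retract_point retract_level_top)

lemma bundle_retract_vert:
  assumes "0 < c" "c \<le> M" "p \<in> verts (bundle_graph T M)"
  shows "bundle_retract M c t p \<in> verts (bundle_graph T M)"
proof -
  obtain \<sigma> i u where "p = bundle_point M \<sigma> i u" "\<sigma> \<in> automorphisms T" "i \<le> M" "u \<in> verts T"
    using assms(3) unfolding verts_bundle_graph by blast
  then show ?thesis
    using assms(1,2) by (simp add: bundle_retract_point retract_level_le bundle_point_in_verts)
qed

lemma bundle_retract_edge:
  assumes c: "0 < c" "c < M" and pq: "(p, q) \<in> edges (bundle_graph T M)"
    and avoid: "\<And>\<sigma>. snd p \<noteq> Some (\<sigma>, c)" "\<And>\<sigma>. snd q \<noteq> Some (\<sigma>, c)"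
    and st: "s \<le> Suc t" "t \<le> Suc s"
  shows "(bundle_retract M c s p, bundle_retract M c t q) \<in> edges (bundle_graph T M)"
proof -
  obtain \<sigma> i j u v where p: "p = bundle_point M \<sigma> i u" and q: "q = bundle_point M \<sigma> j v"
    and \<sigma>: "\<sigma> \<in> automorphisms T" and uv: "(u, v) \<in> edges T"
    and ij: "i \<le> M" "j \<le> M" "i \<le> Suc j" "j \<le> Suc i"
    using pq unfolding edges_bundle_graph by blast
  have "i \<noteq> c" "j \<noteq> c"
    using avoid(1)[of \<sigma>] avoid(2)[of \<sigma>] c unfolding p q by (auto simp: bundle_point_def)
  then show ?thesis
    unfolding p q using c ij st
    by (simp add: bundle_retract_point bundle_point_edge[OF \<sigma> uv] retract_level_le retract_level_close)
qed

lemma exists_level_not_in_image: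
  assumes "finite A" "card A + 2 \<le> M"
  shows "\<exists>c. 0 < c \<and> c < M \<and> c \<notin> h ` A"
proof -
  have "card (h ` A) < card {1..<M}"
    using card_image_le[OF assms(1), of h] assms(2) by simp
  then have "\<not> {1..<M} \<subseteq> h ` A"
    using card_mono[OF finite_imageI[OF assms(1)]] by (meson leD)
  then show ?thesis by auto
qed

lemma graph_hom_bundle_retract:
  assumes wf: "wf_graph T" and c: "0 < c" "c < M"
    and g: "graph_hom T (bundle_graph T M) g"
    and avoid: "\<And>x \<sigma>. x \<in> verts T \<Longrightarrow> snd (g x) \<noteq> Some (\<sigma>, c)"
  shows "graph_hom T (bundle_graph T M) (\<lambda>x. bundle_retract M c t (g x))"
  unfolding graph_hom_def
proof (intro conjI ballI)
  show "bundle_retract M c t (g x) \<in> verts (bundle_graph T M)" if "x \<in> verts T" for x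
    using c g that by (simp add: graph_hom_def bundle_retract_vert)
  show "case xy of (x, y) \<Rightarrow> (bundle_retract M c t (g x), bundle_retract M c t (g y)) \<in> edges (bundle_graph T M)"
    if "xy \<in> edges T" for xy
    using c g that avoid wf_graph_edgeD(1,2)[OF wf] by (auto simp: graph_hom_def intro!: bundle_retract_edge)
qed

lemma rtrancl_hom_adj_bundle_retract:
  assumes wf: "wf_graph T" and fin: "finite (verts T)" and c: "0 < c" "c < M"
    and g: "g \<in> hom_vertices T (bundle_graph T M)"
    and avoid: "\<And>x \<sigma>. x \<in> verts T \<Longrightarrow> snd (g x) \<noteq> Some (\<sigma>, c)"
  shows "(restrict (\<lambda>x. bundle_retract M c 0 (g x)) (verts T), g) \<in> (hom_adj T (bundle_graph T M))\<^sup>*"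
proof -
  have g_vert: "\<And>x. x \<in> verts T \<Longrightarrow> g x \<in> verts (bundle_graph T M)"
    and g_edge: "\<And>x y. (x, y) \<in> edges T \<Longrightarrow> (g x, g y) \<in> edges (bundle_graph T M)"
    using g by (auto simp: hom_vertices_def graph_hom_def)
  have "(restrict (\<lambda>x. bundle_retract M c 0 (g x)) (verts T), restrict (\<lambda>x. bundle_retract M c M (g x)) (verts T))
      \<in> (hom_adj T (bundle_graph T M))\<^sup>*"
    by (rule rtrancl_hom_adj_chain[where \<Phi> = "\<lambda>t x. bundle_retract M c t (g x)", OF wf fin])
      (use c g_vert g_edge avoid wf_graph_edgeD(1,2)[OF wf] in \<open>simp_all add: bundle_retract_vert bundle_retract_edge\<close>)
  moreover have "restrict (\<lambda>x. bundle_retract M c M (g x)) (verts T) = g"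
    using g bundle_retract_top[OF c(1) less_imp_le[OF c(2)] g_vert]
    by (intro extensionalityI[where A = "verts T"]) (auto simp: hom_vertices_def)
  ultimately show ?thesis by simp
qed

lemma graph_hom_of_bundle_base:
  assumes "2 \<le> M" "graph_hom T (bundle_graph T M) (\<lambda>x. (e x, None))"
  shows "graph_hom T T e"
  unfolding graph_hom_def
proof (intro conjI ballI)
  show "e x \<in> verts T" if "x \<in> verts T" for x
    using assms(2) that by (auto simp: graph_hom_def intro: bundle_base_vert)
  show "case xy of (x, y) \<Rightarrow> (e x, e y) \<in> edges T" if "xy \<in> edges T" for xy
    using assms that by (auto simp: graph_hom_def intro: bundle_base_edge)
qed

lemma rtrancl_hom_adj_bundle_cylinder:
  assumes wf: "wf_graph T" and fin: "finite (verts T)" and e: "e \<in> automorphisms T" and M: "0 < M"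
  shows "(restrict (\<lambda>x. (x, None)) (verts T), restrict (\<lambda>x. (e x, None)) (verts T))
    \<in> (hom_adj T (bundle_graph T M))\<^sup>*"
proof -
  have "(restrict (bundle_point M e 0) (verts T), restrict (bundle_point M e M) (verts T))
      \<in> (hom_adj T (bundle_graph T M))\<^sup>*"
    by (rule rtrancl_hom_adj_chain[OF wf fin]) (simp_all add: e bundle_point_in_verts bundle_point_edge)
  moreover have "bundle_point M e 0 = (\<lambda>x. (x, None))" "bundle_point M e M = (\<lambda>x. (e x, None))"
    using M by (simp_all add: bundle_point_def fun_eq_iff)
  ultimately show ?thesis by simp
qed

lemma rtrancl_hom_adj_bundle_base:
  assumes wf: "wf_graph T" and fin: "finite (verts T)"
    and endo: "\<forall>g. graph_hom T T g \<longrightarrow> graph_aut T g"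
    and M: "card (verts T) + 2 \<le> M"
    and g: "g \<in> hom_vertices T (bundle_graph T M)"
  shows "(restrict (\<lambda>x. (x, None)) (verts T), g) \<in> (hom_adj T (bundle_graph T M))\<^sup>*"
proof -
  obtain c where c: "0 < c" "c < M"
    and c_unused: "c \<notin> (\<lambda>x. case snd (g x) of None \<Rightarrow> 0 | Some (\<sigma>, i) \<Rightarrow> i) ` verts T"
    using exists_level_not_in_image[OF fin M] by blast
  have avoid: "snd (g x) \<noteq> Some (\<sigma>, c)" if "x \<in> verts T" for x \<sigma>
    using c_unused that by force
  define e where "e x = fst (bundle_retract M c 0 (g x))" for x
  have retract_bottom: "bundle_retract M c 0 (g x) = (e x, None)" for x
    by (simp add: e_def prod_eq_iff bundle_retract_bottom)
  have "graph_hom T T e"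
    using graph_hom_bundle_retract[where g = g and t = 0, OF wf c _ avoid] g M retract_bottom
    by (intro graph_hom_of_bundle_base[of M]) (simp_all add: hom_vertices_def)
  then have "restrict e (verts T) \<in> automorphisms T"
    using endo restrict_in_hom_vertices[OF wf, of T e] by (simp add: automorphisms_def hom_vertices_def)
  from rtrancl_hom_adj_bundle_cylinder[OF wf fin this, of M] M
  have "(restrict (\<lambda>x. (x, None)) (verts T), restrict (\<lambda>x. bundle_retract M c 0 (g x)) (verts T))
      \<in> (hom_adj T (bundle_graph T M))\<^sup>*"
    by (simp add: retract_bottom cong: restrict_cong)
  then show ?thesis
    using rtrancl_hom_adj_bundle_retract[OF wf fin c g avoid] by (rule rtrancl_trans)
qed

lemma hom_connected_bundle_graph:
  assumes "wf_graph T" "finite (verts T)" "\<forall>g. graph_hom T T g \<longrightarrow> graph_aut T g"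
    and "card (verts T) + 2 \<le> M"
  shows "hom_connected T (bundle_graph T M)"
proof -
  let ?base = "restrict (\<lambda>x. (x, None)) (verts T)"
  show ?thesis
    unfolding hom_connected_def
  proof (intro conjI ballI)
    show "hom_vertices T (bundle_graph T M) \<noteq> {}"
      using restrict_in_hom_vertices[OF assms(1) graph_hom_bundle_base[OF assms(1)]] by blast
    fix f g
    assume "f \<in> hom_vertices T (bundle_graph T M)" "g \<in> hom_vertices T (bundle_graph T M)"
    then have "(f, ?base) \<in> (hom_adj T (bundle_graph T M))\<^sup>*"
      and "(?base, g) \<in> (hom_adj T (bundle_graph T M))\<^sup>*"
      using rtrancl_hom_adj_sym rtrancl_hom_adj_bundle_base[OF assms] by blast+
    then show "(f, g) \<in> (hom_adj T (bundle_graph T M))\<^sup>*"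
      by (rule rtrancl_trans)
  qed
qed

lemma rtrancl_imp_eventually_constant_walk:
  assumes "(a, b) \<in> R\<^sup>*"
  shows "\<exists>p. p 0 = a \<and> (\<forall>i. (p i, p (Suc i)) \<in> R\<^sup>=) \<and> (\<forall>\<^sub>F i in sequentially. p i = b)"
proof -
  obtain n p where "p 0 = a" "p n = b" "\<forall>i<n. (p i, p (Suc i)) \<in> R"
    using assms by (metis rtrancl_power relpow_fun_conv)
  moreover have "(p (min i n), p (min (Suc i) n)) \<in> R\<^sup>=" for i
    using \<open>\<forall>i<n. (p i, p (Suc i)) \<in> R\<close> by (cases "i < n") (simp_all add: min_def)
  moreover have "\<forall>\<^sub>F i in sequentially. p (min i n) = p n"
    unfolding eventually_sequentially by (rule exI[of _ n]) simp
  ultimately show ?thesis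
    by (intro exI[of _ "\<lambda>i. p (min i n)"]) simp
qed

lemma complete_graph_colours_differ:
  assumes f: "f \<in> hom_vertices T (complete_graph r)" and g: "g \<in> hom_vertices T (complete_graph r)"
    and fg: "(f, g) \<in> (hom_adj T (complete_graph r))\<^sup>="
    and uv: "(u, v) \<in> edges T" "u \<in> verts T" "v \<in> verts T"
  shows "f u \<noteq> g v"
proof
  assume eq: "f u = g v"
  have "f u \<noteq> f v" "g u \<noteq> g v"
    using f g uv(1) by (auto simp: hom_vertices_def graph_hom_def complete_graph_def edges_def)
  then have "f \<noteq> g" and u: "u \<in> {x \<in> verts T. f x \<noteq> g x}" and v: "v \<in> {x \<in> verts T. f x \<noteq> g x}"
    using eq uv(2,3) by auto
  then have "card {x \<in> verts T. f x \<noteq> g x} = 1"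
    using fg by (simp add: hom_adj_def)
  then have "u = v"
    using u v by (metis card_1_singletonE singletonD)
  with \<open>f u \<noteq> f v\<close> show False by simp
qed

lemma reflcl_walk_neighbours:
  assumes "sym R" "\<And>i. (p i, p (Suc i)) \<in> R\<^sup>=" "i \<le> Suc j" "j \<le> Suc i"
  shows "(p i, p j) \<in> R\<^sup>="
proof -
  have "j = i \<or> j = Suc i \<or> i = Suc j" using assms(3,4) by linarith
  then show ?thesis
  proof (elim disjE)
    assume "i = Suc j"
    then have "(p j, p i) \<in> R\<^sup>=" using assms(2)[of j] by simp
    then show ?thesis by (rule symD[OF sym_Un[OF assms(1) sym_Id]])
  qed (use assms(2)[of i] in simp_all)
qed

lemma hom_adj_walk_in_hom_vertices:
  assumes "p 0 \<in> hom_vertices T G" "\<And>i. (p i, p (Suc i)) \<in> (hom_adj T G)\<^sup>="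
  shows "p i \<in> hom_vertices T G"
proof (induction i)
  case (Suc i) then show ?case using assms(2)[of i] by (auto simp: hom_adj_def)
qed (use assms(1) in simp)

text \<open>Level \<open>i\<close> of the \<open>\<sigma>\<close>-cylinder is coloured by step \<open>i\<close> of a walk from \<open>f\<close> to \<open>f \<circ> \<sigma>\<close>, so the
  colouring agrees with \<open>f\<close> on the base at both ends of the cylinder.\<close>

lemma graph_hom_bundle_graph_walk_colouring:
  assumes wf: "wf_graph T" and f: "f \<in> hom_vertices T (complete_graph r)"
    and W_0: "\<And>\<sigma>. \<sigma> \<in> automorphisms T \<Longrightarrow> W \<sigma> 0 = f"
    and W_step: "\<And>\<sigma> i. \<sigma> \<in> automorphisms T \<Longrightarrow> (W \<sigma> i, W \<sigma> (Suc i)) \<in> (hom_adj T (complete_graph r))\<^sup>="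
    and W_M: "\<And>\<sigma>. \<sigma> \<in> automorphisms T \<Longrightarrow> W \<sigma> M = restrict (f \<circ> \<sigma>) (verts T)"
  shows "graph_hom (bundle_graph T M) (complete_graph r)
    (\<lambda>p. case p of (u, None) \<Rightarrow> f u | (u, Some (\<sigma>, i)) \<Rightarrow> W \<sigma> i u)"
    (is "graph_hom _ _ ?col")
proof -
  have W_hom: "W \<sigma> i \<in> hom_vertices T (complete_graph r)" if "\<sigma> \<in> automorphisms T" for \<sigma> i
    by (rule hom_adj_walk_in_hom_vertices[where p = "W \<sigma>"]) (use f W_0[OF that] W_step[OF that] in simp_all)
  have W_less: "W \<sigma> i u < r" if "\<sigma> \<in> automorphisms T" "u \<in> verts T" for \<sigma> i u
    using W_hom[OF that(1)] that(2) by (auto simp: hom_vertices_def graph_hom_def complete_graph_def verts_def)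
  have col_point: "?col (bundle_point M \<sigma> i u) = W \<sigma> i u"
    if "\<sigma> \<in> automorphisms T" "i \<le> M" "u \<in> verts T" for \<sigma> i u
    using that W_0 W_M by (auto simp: bundle_point_def)
  show ?thesis
    unfolding graph_hom_def
  proof (intro conjI ballI)
    fix p assume "p \<in> verts (bundle_graph T M)"
    then show "?col p \<in> verts (complete_graph r)"
      unfolding verts_bundle_graph using W_less col_point by (auto simp: complete_graph_def verts_def)
  next
    fix pq assume "pq \<in> edges (bundle_graph T M)"
    then obtain \<sigma> i j u v where pq: "pq = (bundle_point M \<sigma> i u, bundle_point M \<sigma> j v)"
      and \<sigma>: "\<sigma> \<in> automorphisms T" and uv: "(u, v) \<in> edges T"
      and ij: "i \<le> M" "j \<le> M" "i \<le> Suc j" "j \<le> Suc i"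
      unfolding edges_bundle_graph by blast
    have uv_verts: "u \<in> verts T" "v \<in> verts T" using wf_graph_edgeD(1,2)[OF wf uv] .
    have "(W \<sigma> i, W \<sigma> j) \<in> (hom_adj T (complete_graph r))\<^sup>="
      using sym_hom_adj W_step[OF \<sigma>] ij(3,4) by (rule reflcl_walk_neighbours)
    then have "W \<sigma> i u \<noteq> W \<sigma> j v"
      using complete_graph_colours_differ[OF W_hom[OF \<sigma>] W_hom[OF \<sigma>] _ uv uv_verts] by blast
    then show "case pq of (p, q) \<Rightarrow> (?col p, ?col q) \<in> edges (complete_graph r)"
      using pq \<sigma> ij uv_verts col_point W_less by (simp add: complete_graph_def edges_def)
  qed
qed

lemma eventually_bundle_graph_colourable:
  assumes wf: "wf_graph T" and fin: "finite (verts T)"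
    and f: "f \<in> hom_vertices T (complete_graph r)"
    and walks: "\<And>\<sigma>. \<sigma> \<in> automorphisms T \<Longrightarrow>
      (f, restrict (f \<circ> \<sigma>) (verts T)) \<in> (hom_adj T (complete_graph r))\<^sup>*"
  shows "\<forall>\<^sub>F M in sequentially. \<exists>col. graph_hom (bundle_graph T M) (complete_graph r) col"
proof -
  have "\<forall>\<sigma>\<in>automorphisms T. \<exists>p. p 0 = f \<and> (\<forall>i. (p i, p (Suc i)) \<in> (hom_adj T (complete_graph r))\<^sup>=) \<and>
      (\<forall>\<^sub>F i in sequentially. p i = restrict (f \<circ> \<sigma>) (verts T))"
    by (intro ballI rtrancl_imp_eventually_constant_walk walks)
  from bchoice[OF this] obtain W where W: "\<forall>\<sigma>\<in>automorphisms T. W \<sigma> 0 = f \<and>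
      (\<forall>i. (W \<sigma> i, W \<sigma> (Suc i)) \<in> (hom_adj T (complete_graph r))\<^sup>=) \<and>
      (\<forall>\<^sub>F i in sequentially. W \<sigma> i = restrict (f \<circ> \<sigma>) (verts T))" ..
  then have "\<forall>\<^sub>F M in sequentially. \<forall>\<sigma>\<in>automorphisms T. W \<sigma> M = restrict (f \<circ> \<sigma>) (verts T)"
    by (intro eventually_ball_finite finite_automorphisms[OF fin]) blast
  then show ?thesis
  proof (rule eventually_mono)
    fix M assume "\<forall>\<sigma>\<in>automorphisms T. W \<sigma> M = restrict (f \<circ> \<sigma>) (verts T)"
    then have "graph_hom (bundle_graph T M) (complete_graph r)
        (\<lambda>p. case p of (u, None) \<Rightarrow> f u | (u, Some (\<sigma>, i)) \<Rightarrow> W \<sigma> i u)"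
      using W by (intro graph_hom_bundle_graph_walk_colouring[OF wf f]) blast+
    then show "\<exists>col. graph_hom (bundle_graph T M) (complete_graph r) col" by blast
  qed
qed

lemma ex_nat_graph_copy:
  assumes "wf_graph T" "wf_graph G" "finite (verts G)" "hom_connected T G"
  shows "\<exists>H :: nat graph. wf_graph H \<and> chromatic_number H = chromatic_number G \<and> hom_connected T H"
proof -
  obtain \<phi> :: "'b \<Rightarrow> nat" where \<phi>: "inj_on \<phi> (verts G)"
    using finite_imp_inj_to_nat_seg[OF assms(3)] by metis
  show ?thesis
    using wf_graph_map_graph[OF assms(2)] chromatic_number_map_graph[OF assms(2) \<phi>]
      hom_connected_map_graph[OF assms(1,2) \<phi> assms(4)]
    by (intro exI[of _ "map_graph \<phi> G"]) simp
qed

theorem theorem3p1: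
  fixes T :: "'a graph"
  assumes "wf_graph T" and "finite (verts T)"
    and "\<forall>g. graph_hom T T g \<longrightarrow> graph_aut T g"
    and "\<exists>r. chromatic_number T = enat r \<and>
           (\<exists>C. hom_path_component T (complete_graph r) C \<and> aut_invariant T C)"
  shows "\<exists>G :: nat graph. wf_graph G \<and> chromatic_number G = chromatic_number T \<and>
           hom_connected T G"
proof -
  obtain r C where r: "chromatic_number T = enat r"
    and C: "hom_path_component T (complete_graph r) C" and inv: "aut_invariant T C"
    using assms(4) by blast
  obtain f where f: "f \<in> hom_vertices T (complete_graph r)"
    and C_eq: "C = {g. (f, g) \<in> (hom_adj T (complete_graph r))\<^sup>*}"
    using C unfolding hom_path_component_def by blast
  have "(f, restrict (f \<circ> \<sigma>) (verts T)) \<in> (hom_adj T (complete_graph r))\<^sup>*"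
    if "\<sigma> \<in> automorphisms T" for \<sigma>
    using inv that unfolding aut_invariant_def automorphisms_def C_eq by blast
  then have "\<forall>\<^sub>F M in sequentially. card (verts T) + 2 \<le> M \<and>
      (\<exists>col. graph_hom (bundle_graph T M) (complete_graph r) col)"
    by (intro eventually_conj eventually_ge_at_top eventually_bundle_graph_colourable[OF assms(1,2) f])
  then obtain M col where M: "card (verts T) + 2 \<le> M"
    and col: "graph_hom (bundle_graph T M) (complete_graph r) col"
    unfolding eventually_sequentially by blast
  have "chromatic_number (bundle_graph T M) = chromatic_number T"
  proof (rule antisym)
    show "chromatic_number (bundle_graph T M) \<le> chromatic_number T"
      using chromatic_number_le_if_colouring[OF col] r by simp
    show "chromatic_number T \<le> chromatic_number (bundle_graph T M)"
      by (rule chromatic_number_mono[OF graph_hom_bundle_base[OF assms(1)]])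
  qed
  then show ?thesis
    using ex_nat_graph_copy[OF assms(1) wf_bundle_graph[OF assms(1)] finite_bundle_graph[OF assms(2)]
        hom_connected_bundle_graph[OF assms(1-3) M]]
    by simp
qed

end
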